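(* Let $\mathcal G$ be a synchronous game. There is $C>0$ depending only on $\mathcal G$ such that for every $0<\epsilon\le1$: if $\mathcal S=(\{E^i_a\},\{F^i_a\},|\psi\rangle)$ is an $\epsilon$-perfect quantum strategy for $\mathcal G$ and $\rho=\lambda^2$ is the reduced density matrix of $|\psi\rangle$ on Bob's factor, then $p^i_a\mapsto F^i_a$ is a $C\epsilon^{1/4}$-representation of the synchronous algebra $\mathcal A(\mathcal G)$ with respect to $\|\cdot\|_\rho$. If moreover $\mathcal S$ is a synchronous strategy, then $\|F^i_a\lambda-\lambda F^i_a\|_F\le C\epsilon^{1/2}$ for all $(i,a)$.
   Context: A game $\mathcal{G}=(\eta,I,J,A,B,V)$ has finite input sets, output sets, a distribution $\eta$ on $I\times J$ and predicate $V$. A synchronous game has $I=J$, $A=B$, $V(a,b|i,i)=0$ for $a\ne b$, and $\eta(i,j)>0$ for all $i,j$. A quantum strategy consists of a finite-dimensional Hilbert space $H$, PVMs $\{E^i_a\}_a$ (Alice) and $\{F^i_a\}_a$ (Bob) on $H$ and a unit vector $|\psi\rangle\in H\otimes H$, written $|\psi\rangle=\sum_t|t\rangle\otimes\lambda|t\rangle$ for an orthonormal basis $\{|t\rangle\}$ and positive semidefinite $\lambda$ with $\mathrm{tr}(\lambda^2)=1$ (so $\rho=\lambda^2$); $\overline X$ is entrywise conjugation in this basis. It is $\epsilon$-perfect if $\sum_{i,j}\eta(i,j)\sum_{a,b}V(a,b|i,j)\langle\psi|E^i_a\otimes F^j_b|\psi\rangle\ge1-\epsilon$, and synchronous if $E^i_a=\overline{F^i_a}$.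 Norms: $\|A\|_F=\mathrm{tr}(A^*A)^{1/2}$, $\|T\|_\rho=\|T\rho^{1/2}\|_F$. The synchronous algebra $\mathcal A(\mathcal G)$ is the finitely presented $*$-algebra with generators $p^i_a$ and relations $(p^i_a)^2=p^i_a=(p^i_a)^*$, $\sum_ap^i_a=1$ for each $i$, $p^i_ap^j_b=0$ whenever $V(a,b|i,j)=0$. An $\epsilon$-representation with respect to a seminorm $\|\cdot\|$ is an assignment of operators to generators (extended to a unital $*$-homomorphism of the free $*$-algebra) under which every defining relation $r$ (a relation $a=b$ meaning $r=a-b$) satisfies $\|\phi(r)\|\le\epsilon$. *)

theory Defs
  imports Complex_Main "Jordan_Normal_Form.Schur_Decomposition"
begin

text \<open>A game with question set 'i (both players) and answer set 'a (both players);
  eta is the question distribution, V a b i j is the predicate V(a,b|i,j)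
  (True = 1, False = 0).\<close>

definition synchronous_game ::
  "('i::finite \<Rightarrow> 'i \<Rightarrow> real) \<Rightarrow> ('a::finite \<Rightarrow> 'a \<Rightarrow> 'i \<Rightarrow> 'i \<Rightarrow> bool) \<Rightarrow> bool" where
  "synchronous_game eta V \<longleftrightarrow>
     (\<forall>i j. eta i j > 0) \<and> (\<Sum>i\<in>UNIV. \<Sum>j\<in>UNIV. eta i j) = 1 \<and>
     (\<forall>i a b. a \<noteq> b \<longrightarrow> \<not> V a b i i)"

definition hermitian_mat :: "nat \<Rightarrow> complex mat \<Rightarrow> bool" where
  "hermitian_mat d A \<longleftrightarrow> A \<in> carrier_mat d d \<and> mat_adjoint A = A"

definition qform :: "complex mat \<Rightarrow> complex vec \<Rightarrow> complex" where
  "qform A v = (\<Sum>k<dim_vec v. cnj (v $ k) * ((A *\<^sub>v v) $ k))"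

definition psd_mat :: "nat \<Rightarrow> complex mat \<Rightarrow> bool" where
  "psd_mat d A \<longleftrightarrow> hermitian_mat d A \<and>
     (\<forall>v\<in>carrier_vec d. Re (qform A v) \<ge> 0)"

text \<open>Kronecker product on C^d \<otimes> C^d, basis e_s \<otimes> e_u indexed by s*d+u.\<close>
definition kron :: "nat \<Rightarrow> complex mat \<Rightarrow> complex mat \<Rightarrow> complex mat" where
  "kron d A B = mat (d*d) (d*d)
     (\<lambda>(p,q). A $$ (p div d, q div d) * B $$ (p mod d, q mod d))"

text \<open>The state psi = \<Sum>_t |t\<rangle> \<otimes> lambda |t\<rangle>.\<close>
definition state_vec :: "nat \<Rightarrow> complex mat \<Rightarrow> complex vec" where
  "state_vec d lam = vec (d*d) (\<lambda>p. lam $$ (p mod d, p div d))"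

definition mtrace :: "complex mat \<Rightarrow> complex" where
  "mtrace A = (\<Sum>k<dim_row A. A $$ (k,k))"

definition frob_norm :: "complex mat \<Rightarrow> real" where
  "frob_norm A = sqrt (Re (mtrace (mat_adjoint A * A)))"

text \<open>||T||_rho = ||T rho^(1/2)||_F with rho = lam^2, so rho^(1/2) = lam (lam psd).\<close>
definition rho_norm :: "complex mat \<Rightarrow> complex mat \<Rightarrow> real" where
  "rho_norm lam T = frob_norm (T * lam)"

definition entry_conj :: "complex mat \<Rightarrow> complex mat" where
  "entry_conj A = map_mat cnj A"

definition msum :: "nat \<Rightarrow> ('a::finite \<Rightarrow> complex mat) \<Rightarrow> complex mat" where
  "msum d P = mat d d (\<lambda>(p,q). \<Sum>a\<in>UNIV. P a $$ (p,q))"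

definition PVM :: "nat \<Rightarrow> ('a::finite \<Rightarrow> complex mat) \<Rightarrow> bool" where
  "PVM d P \<longleftrightarrow> (\<forall>a. hermitian_mat d (P a) \<and> P a * P a = P a) \<and>
     msum d P = 1\<^sub>m d"

definition quantum_strategy ::
  "nat \<Rightarrow> ('i::finite \<Rightarrow> 'a::finite \<Rightarrow> complex mat) \<Rightarrow> ('i \<Rightarrow> 'a \<Rightarrow> complex mat)
     \<Rightarrow> complex mat \<Rightarrow> bool" where
  "quantum_strategy d E F lam \<longleftrightarrow> 0 < d \<and>
     (\<forall>i. PVM d (E i)) \<and> (\<forall>i. PVM d (F i)) \<and>
     psd_mat d lam \<and> mtrace (lam * lam) = 1"

definition win_prob ::
  "('i::finite \<Rightarrow> 'i \<Rightarrow> real) \<Rightarrow> ('a::finite \<Rightarrow> 'a \<Rightarrow> 'i \<Rightarrow> 'i \<Rightarrow> bool) \<Rightarrow> nat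
   \<Rightarrow> ('i \<Rightarrow> 'a \<Rightarrow> complex mat) \<Rightarrow> ('i \<Rightarrow> 'a \<Rightarrow> complex mat) \<Rightarrow> complex mat \<Rightarrow> real" where
  "win_prob eta V d E F lam =
     (\<Sum>i\<in>UNIV. \<Sum>j\<in>UNIV. eta i j * (\<Sum>a\<in>UNIV. \<Sum>b\<in>UNIV.
        (if V a b i j then Re (qform (kron d (E i a) (F j b)) (state_vec d lam)) else 0)))"

definition eps_perfect ::
  "('i::finite \<Rightarrow> 'i \<Rightarrow> real) \<Rightarrow> ('a::finite \<Rightarrow> 'a \<Rightarrow> 'i \<Rightarrow> 'i \<Rightarrow> bool) \<Rightarrow> nat
   \<Rightarrow> ('i \<Rightarrow> 'a \<Rightarrow> complex mat) \<Rightarrow> ('i \<Rightarrow> 'a \<Rightarrow> complex mat) \<Rightarrow> complex mat \<Rightarrow> real \<Rightarrow> bool" where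
  "eps_perfect eta V d E F lam eps \<longleftrightarrow> win_prob eta V d E F lam \<ge> 1 - eps"

definition synchronous_strategy ::
  "('i \<Rightarrow> 'a \<Rightarrow> complex mat) \<Rightarrow> ('i \<Rightarrow> 'a \<Rightarrow> complex mat) \<Rightarrow> bool" where
  "synchronous_strategy E F \<longleftrightarrow> (\<forall>i a. E i a = entry_conj (F i a))"

datatype ('i, 'a) fexpr =
    Gen 'i 'a | Zero | Unit | Add "('i,'a) fexpr" "('i,'a) fexpr" | Neg "('i,'a) fexpr"
  | Mul "('i,'a) fexpr" "('i,'a) fexpr" | Star "('i,'a) fexpr" | Scal complex "('i,'a) fexpr"

fun feval :: "nat \<Rightarrow> ('i \<Rightarrow> 'a \<Rightarrow> complex mat) \<Rightarrow> ('i,'a) fexpr \<Rightarrow> complex mat" where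
  "feval d F (Gen i a) = F i a"
| "feval d F Zero = 0\<^sub>m d d"
| "feval d F Unit = 1\<^sub>m d"
| "feval d F (Add x y) = feval d F x + feval d F y"
| "feval d F (Neg x) = - feval d F x"
| "feval d F (Mul x y) = feval d F x * feval d F y"
| "feval d F (Star x) = mat_adjoint (feval d F x)"
| "feval d F (Scal c x) = c \<cdot>\<^sub>m feval d F x"

definition fsum :: "('i,'a) fexpr list \<Rightarrow> ('i,'a) fexpr" where
  "fsum xs = foldr Add xs Zero"

text \<open>Defining relations r (relation x = y written as r = x - y).\<close>
definition sync_relations ::
  "('a::finite \<Rightarrow> 'a \<Rightarrow> 'i::finite \<Rightarrow> 'i \<Rightarrow> bool) \<Rightarrow> ('i,'a) fexpr set" where
  "sync_relations V =
     {Add (Mul (Gen i a) (Gen i a)) (Neg (Gen i a)) | i a. True}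
   \<union> {Add (Gen i a) (Neg (Star (Gen i a))) | i a. True}
   \<union> {Add (fsum (map (Gen i) xs)) (Neg Unit) | i xs. distinct xs \<and> set xs = UNIV}
   \<union> {Mul (Gen i a) (Gen j b) | i j a b. \<not> V a b i j}"

definition eps_representation ::
  "('i,'a) fexpr set \<Rightarrow> (complex mat \<Rightarrow> real) \<Rightarrow> nat \<Rightarrow> ('i \<Rightarrow> 'a \<Rightarrow> complex mat) \<Rightarrow> real \<Rightarrow> bool" where
  "eps_representation R nrm d F eps \<longleftrightarrow> (\<forall>r\<in>R. nrm (feval d F r) \<le> eps)"

end

theory Submission
  imports Defs "HOL-Analysis.L2_Norm"
begin

text \<open>
  Write rho = lam^2 and conj X for the entrywise conjugate of X. The probability of answers (a, b)
  to questions (i, j) is tr(lam F^j_b lam conj E^i_a) = ||F^j_b lam conj E^i_a||_F^2. Every question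
  pair has weight at least m = min eta > 0, so an eps-perfect strategy loses mass at most eps/m on
  each pair. On a diagonal pair, where only equal answers win, this gives
  sum_a ||conj E^i_a lam - lam F^i_a||_F^2 <= 2 eps/m: lam almost intertwines conj E and F, which for
  a synchronous strategy (conj E = F) is the commutator bound. For a losing answer pair, three such
  exchanges of lam turn ||F^i_a F^j_b lam||_F^2 = tr(F^j_b F^i_a F^j_b rho) into the probability
  tr(lam F^j_b lam conj E^i_a) <= eps/m, each at a Cauchy-Schwarz cost O(sqrt eps); hence
  ||F^i_a F^j_b||_rho = O(eps^(1/4)). The other defining relations hold exactly.
\<close>

lemma mat_adjoint_altdef:
  "mat_adjoint (A::complex mat) = mat (dim_col A) (dim_row A) (\<lambda>(i,j). cnj (A $$ (j,i)))"
  unfolding mat_adjoint_def by (rule eq_matI) (auto simp: mat_of_rows_index)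

lemma mat_adjoint_carrier [simp]:
  "(A::complex mat) \<in> carrier_mat n m \<Longrightarrow> mat_adjoint A \<in> carrier_mat m n"
  by (simp add: mat_adjoint_altdef)

lemma dim_mat_adjoint [simp]:
  "dim_row (mat_adjoint (A::complex mat)) = dim_col A"
  "dim_col (mat_adjoint (A::complex mat)) = dim_row A"
  by (simp_all add: mat_adjoint_altdef)

lemma index_mat_adjoint [simp]:
  "i < dim_col A \<Longrightarrow> j < dim_row A \<Longrightarrow> mat_adjoint (A::complex mat) $$ (i,j) = cnj (A $$ (j,i))"
  by (simp add: mat_adjoint_altdef)

lemma mat_adjoint_mult:
  assumes "(A::complex mat) \<in> carrier_mat n m" "B \<in> carrier_mat m p"
  shows "mat_adjoint (A * B) = mat_adjoint B * mat_adjoint A"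
  using assms by (intro eq_matI) (auto simp: scalar_prod_def mult.commute intro!: sum.cong)

lemma mat_adjoint_minus:
  assumes "(A::complex mat) \<in> carrier_mat n m" "B \<in> carrier_mat n m"
  shows "mat_adjoint (A - B) = mat_adjoint A - mat_adjoint B"
  using assms by (intro eq_matI) auto

lemma hermitian_entry_cnj:
  assumes "P \<in> carrier_mat d d" "mat_adjoint P = P" "i < d" "j < d"
  shows "P $$ (i,j) = cnj (P $$ (j,i))"
  using index_mat_adjoint[of i P j] assms by simp

lemma square_mult_carrier [simp]:
  "A \<in> carrier_mat n n \<Longrightarrow> B \<in> carrier_mat n n \<Longrightarrow> A * B \<in> carrier_mat n n"
  by (rule mult_carrier_mat)

lemma square_minus_carrier [simp]:
  "A \<in> carrier_mat n n \<Longrightarrow> B \<in> carrier_mat n n \<Longrightarrow> A - B \<in> carrier_mat n n"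
  by (rule minus_carrier_mat)

lemma square_mult_assoc:
  "A \<in> carrier_mat n n \<Longrightarrow> B \<in> carrier_mat n n \<Longrightarrow> C \<in> carrier_mat n n \<Longrightarrow> A * B * C = A * (B * C)"
  by (rule assoc_mult_mat)

lemma index_mult_mat_sum:
  assumes "(A::complex mat) \<in> carrier_mat n m" "B \<in> carrier_mat m p" "i < n" "j < p"
  shows "(A * B) $$ (i,j) = (\<Sum>k<m. A $$ (i,k) * B $$ (k,j))"
  using assms by (auto simp: scalar_prod_def atLeast0LessThan intro!: sum.cong)

subsection \<open>Trace and Frobenius norm\<close>

lemma mtrace_mult_eq_sum:
  assumes "(A::complex mat) \<in> carrier_mat n m" "B \<in> carrier_mat m n"
  shows "mtrace (A * B) = (\<Sum>i<n. \<Sum>k<m. A $$ (i,k) * B $$ (k,i))"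
  using assms unfolding mtrace_def by (auto simp: scalar_prod_def atLeast0LessThan intro!: sum.cong)

lemma mtrace_mult_commute:
  assumes "(A::complex mat) \<in> carrier_mat n m" "B \<in> carrier_mat m n"
  shows "mtrace (A * B) = mtrace (B * A)"
  unfolding mtrace_mult_eq_sum[OF assms] mtrace_mult_eq_sum[OF assms(2,1)]
  by (subst sum.swap) (simp add: mult.commute)

lemma mtrace_minus:
  assumes "(A::complex mat) \<in> carrier_mat n n" "B \<in> carrier_mat n n"
  shows "mtrace (A - B) = mtrace A - mtrace B"
  using assms unfolding mtrace_def by (simp add: sum_subtractf)

lemma Re_mtrace_adjoint_mult_self:
  assumes "(A::complex mat) \<in> carrier_mat n m"
  shows "Re (mtrace (mat_adjoint A * A)) = (\<Sum>i<m. \<Sum>k<n. (cmod (A $$ (k,i)))\<^sup>2)"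
  using assms by (simp add: mtrace_mult_eq_sum[of _ m n] complex_mult_cnj cmod_power2 mult.commute)

lemma frob_norm_eq_sqrt_sum:
  assumes "(A::complex mat) \<in> carrier_mat n m"
  shows "frob_norm A = sqrt (\<Sum>i<m. \<Sum>k<n. (cmod (A $$ (k,i)))\<^sup>2)"
  unfolding frob_norm_def Re_mtrace_adjoint_mult_self[OF assms] ..

lemma frob_norm_nonneg: "frob_norm A \<ge> 0"
  using frob_norm_eq_sqrt_sum[of A "dim_row A" "dim_col A"] by (simp add: sum_nonneg)

lemma frob_norm_sq_eq_sum:
  assumes "(A::complex mat) \<in> carrier_mat n m"
  shows "(frob_norm A)\<^sup>2 = (\<Sum>i<m. \<Sum>k<n. (cmod (A $$ (k,i)))\<^sup>2)"
  unfolding frob_norm_eq_sqrt_sum[OF assms] by (simp add: sum_nonneg)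

lemma frob_norm_sq_eq_mtrace:
  assumes "(A::complex mat) \<in> carrier_mat n m"
  shows "(frob_norm A)\<^sup>2 = Re (mtrace (mat_adjoint A * A))"
  unfolding frob_norm_sq_eq_sum[OF assms] Re_mtrace_adjoint_mult_self[OF assms] ..

lemma frob_norm_zero [simp]: "frob_norm (0\<^sub>m n m :: complex mat) = 0"
  using frob_norm_eq_sqrt_sum[of "0\<^sub>m n m :: complex mat" n m] by simp

lemma frob_norm_mat_adjoint:
  assumes "(A::complex mat) \<in> carrier_mat n m"
  shows "frob_norm (mat_adjoint A) = frob_norm A"
  unfolding frob_norm_eq_sqrt_sum[OF assms] frob_norm_eq_sqrt_sum[OF mat_adjoint_carrier[OF assms]]
  using assms by (subst sum.swap) (auto intro!: sum.cong)

lemma frob_norm_minus_commute: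
  assumes "(A::complex mat) \<in> carrier_mat n m" "B \<in> carrier_mat n m"
  shows "frob_norm (A - B) = frob_norm (B - A)"
  using assms unfolding frob_norm_eq_sqrt_sum[OF minus_carrier_mat[OF assms(2)]]
    frob_norm_eq_sqrt_sum[OF minus_carrier_mat[OF assms(1)]]
  by (auto intro!: arg_cong[where f=sqrt] sum.cong simp: norm_minus_commute)

lemma cmod_mtrace_mult_le:
  assumes "(A::complex mat) \<in> carrier_mat n m" "B \<in> carrier_mat m n"
  shows "cmod (mtrace (A * B)) \<le> frob_norm A * frob_norm B"
proof -
  let ?S = "{..<n} \<times> {..<m}"
  let ?f = "\<lambda>(i,k). cmod (A $$ (i,k))" and ?g = "\<lambda>(i,k). cmod (B $$ (k,i))"
  have "cmod (mtrace (A * B)) \<le> (\<Sum>i<n. \<Sum>k<m. cmod (A $$ (i,k)) * cmod (B $$ (k,i)))"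
    unfolding mtrace_mult_eq_sum[OF assms]
    by (rule order_trans[OF norm_sum sum_mono], rule order_trans[OF norm_sum sum_mono])
       (simp add: norm_mult)
  also have "\<dots> = (\<Sum>p\<in>?S. \<bar>?f p\<bar> * \<bar>?g p\<bar>)"
    by (simp add: sum.cartesian_product case_prod_beta)
  also have "\<dots> \<le> L2_set ?f ?S * L2_set ?g ?S"
    by (rule L2_set_mult_ineq)
  also have "L2_set ?f ?S = frob_norm A"
    unfolding frob_norm_eq_sqrt_sum[OF assms(1)] L2_set_def
    by (subst sum.swap) (simp add: sum.cartesian_product case_prod_beta)
  also have "L2_set ?g ?S = frob_norm B"
    unfolding frob_norm_eq_sqrt_sum[OF assms(2)] L2_set_def
    by (simp add: sum.cartesian_product case_prod_beta)
  finally show ?thesis .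
qed

lemma frob_norm_diff_sq:
  assumes "(A::complex mat) \<in> carrier_mat n m" "B \<in> carrier_mat n m"
  shows "(frob_norm (A - B))\<^sup>2 =
    (frob_norm A)\<^sup>2 + (frob_norm B)\<^sup>2 - 2 * Re (mtrace (mat_adjoint A * B))"
proof -
  have cmod_diff_sq: "(cmod (a - b))\<^sup>2 = (cmod a)\<^sup>2 + (cmod b)\<^sup>2 - 2 * Re (cnj a * b)" for a b :: complex
    by (simp only: cmod_power2) (simp add: power2_eq_square algebra_simps)
  have "(frob_norm (A - B))\<^sup>2 = (\<Sum>i<m. \<Sum>k<n. (cmod (A $$ (k,i)))\<^sup>2 + (cmod (B $$ (k,i)))\<^sup>2
      - 2 * Re (cnj (A $$ (k,i)) * B $$ (k,i)))"
    unfolding frob_norm_sq_eq_sum[OF minus_carrier_mat[OF assms(2)]]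
    using assms by (intro sum.cong refl) (simp add: cmod_diff_sq)
  also have "\<dots> = (\<Sum>i<m. \<Sum>k<n. (cmod (A $$ (k,i)))\<^sup>2) + (\<Sum>i<m. \<Sum>k<n. (cmod (B $$ (k,i)))\<^sup>2)
      - 2 * Re (\<Sum>i<m. \<Sum>k<n. cnj (A $$ (k,i)) * B $$ (k,i))"
    by (simp only: sum_subtractf sum.distrib sum_distrib_left Re_sum)
  also have "(\<Sum>i<m. \<Sum>k<n. cnj (A $$ (k,i)) * B $$ (k,i)) = mtrace (mat_adjoint A * B)"
    using assms by (simp add: mtrace_mult_eq_sum[of _ m n])
  finally show ?thesis
    by (simp only: frob_norm_sq_eq_sum[OF assms(1)] frob_norm_sq_eq_sum[OF assms(2)])
qed

definition proj_mat :: "nat \<Rightarrow> complex mat \<Rightarrow> bool" where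
  "proj_mat d P \<longleftrightarrow> P \<in> carrier_mat d d \<and> mat_adjoint P = P \<and> P * P = P"

lemma proj_matD:
  assumes "proj_mat d P"
  shows "P \<in> carrier_mat d d" "mat_adjoint P = P" "P * P = P"
  using assms unfolding proj_mat_def by auto

lemma PVM_proj_mat: "PVM d P \<Longrightarrow> proj_mat d (P a)"
  unfolding PVM_def proj_mat_def hermitian_mat_def by auto

lemma proj_mat_mult_idem:
  assumes "proj_mat d P" "X \<in> carrier_mat d m"
  shows "P * (P * X) = P * X"
  using assms proj_matD[OF assms(1)] by (metis assoc_mult_mat)

lemma frob_norm_proj_mult_le:
  assumes P: "proj_mat d P" and X: "X \<in> carrier_mat d m"
  shows "frob_norm (P * X) \<le> frob_norm X"
proof -
  note P_carrier = proj_matD(1)[OF P]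
  have PX: "P * X \<in> carrier_mat d m" using P_carrier X by simp
  have "mat_adjoint (P * X) * (P * X) = mat_adjoint X * (P * (P * X))"
    using mat_adjoint_mult[OF P_carrier X] proj_matD(2)[OF P] P_carrier X
    by (simp add: assoc_mult_mat[of _ m d _ d _ m])
  then have "Re (mtrace (mat_adjoint X * (P * X))) = (frob_norm (P * X))\<^sup>2"
    using frob_norm_sq_eq_mtrace[OF PX] proj_mat_mult_idem[OF P X] by simp
  then have "(frob_norm (X - P * X))\<^sup>2 = (frob_norm X)\<^sup>2 - (frob_norm (P * X))\<^sup>2"
    using frob_norm_diff_sq[OF X PX] by simp
  then have "(frob_norm (P * X))\<^sup>2 \<le> (frob_norm X)\<^sup>2"
    by (smt (verit) zero_le_power2)
  then show ?thesis using frob_norm_nonneg by (meson power2_le_imp_le)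
qed

lemma frob_norm_mult_proj_le:
  assumes P: "proj_mat d P" and X: "X \<in> carrier_mat m d"
  shows "frob_norm (X * P) \<le> frob_norm X"
proof -
  note P_carrier = proj_matD(1)[OF P]
  have "frob_norm (X * P) = frob_norm (P * mat_adjoint X)"
    using frob_norm_mat_adjoint[of "X * P" m d] mat_adjoint_mult[OF X P_carrier] proj_matD(2)[OF P]
      P_carrier X by simp
  also have "\<dots> \<le> frob_norm (mat_adjoint X)"
    using frob_norm_proj_mult_le[OF P, of "mat_adjoint X" m] X by simp
  finally show ?thesis using frob_norm_mat_adjoint[OF X] by simp
qed

lemma entry_conj_carrier [simp]: "P \<in> carrier_mat n m \<Longrightarrow> entry_conj P \<in> carrier_mat n m"
  unfolding entry_conj_def by simp

lemma index_entry_conj [simp]: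
  "i < dim_row P \<Longrightarrow> j < dim_col P \<Longrightarrow> entry_conj P $$ (i,j) = cnj (P $$ (i,j))"
  unfolding entry_conj_def by simp

lemma dim_entry_conj [simp]:
  "dim_row (entry_conj P) = dim_row P" "dim_col (entry_conj P) = dim_col P"
  unfolding entry_conj_def by simp_all

lemma entry_conj_entry_conj [simp]: "entry_conj (entry_conj P) = P"
  by (rule eq_matI) auto

lemma entry_conj_mult:
  assumes "A \<in> carrier_mat n m" "B \<in> carrier_mat m p"
  shows "entry_conj (A * B) = entry_conj A * entry_conj B"
  using assms by (intro eq_matI) (auto simp: scalar_prod_def)

lemma proj_mat_entry_conj:
  assumes P: "proj_mat d P"
  shows "proj_mat d (entry_conj P)"
proof -
  note P_carrier = proj_matD(1)[OF P]
  have "mat_adjoint (entry_conj P) = entry_conj P"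
  proof (rule eq_matI)
    fix i j assume "i < dim_row (entry_conj P)" "j < dim_col (entry_conj P)"
    then show "mat_adjoint (entry_conj P) $$ (i,j) = entry_conj P $$ (i,j)"
      using P_carrier hermitian_entry_cnj[OF P_carrier proj_matD(2)[OF P], of j i] by simp
  qed (use P_carrier in auto)
  moreover have "entry_conj P * entry_conj P = entry_conj P"
    using entry_conj_mult[OF P_carrier P_carrier] proj_matD(3)[OF P] by simp
  ultimately show ?thesis using P_carrier unfolding proj_mat_def by simp
qed

lemma msum_carrier [simp]: "msum d P \<in> carrier_mat d d"
  unfolding msum_def by simp

lemma index_msum [simp]:
  "i < d \<Longrightarrow> j < d \<Longrightarrow> msum d P $$ (i,j) = (\<Sum>a\<in>UNIV. P a $$ (i,j))"
  unfolding msum_def by simp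

lemma msum_entry_conj:
  assumes "msum d P = 1\<^sub>m d" and "\<And>a. P a \<in> carrier_mat d d"
  shows "msum d (\<lambda>a. entry_conj (P a)) = 1\<^sub>m d"
proof (rule eq_matI)
  fix i j assume ij: "i < dim_row (1\<^sub>m d)" "j < dim_col (1\<^sub>m d)"
  have "(\<Sum>a\<in>UNIV. P a $$ (i,j)) = (if i = j then 1 else 0)"
    using arg_cong[where f="\<lambda>M. M $$ (i,j)", OF assms(1)] ij by simp
  moreover have "dim_row (P a) = d" "dim_col (P a) = d" for a
    using assms(2) by auto
  ultimately show "msum d (\<lambda>a. entry_conj (P a)) $$ (i,j) = 1\<^sub>m d $$ (i,j)"
    using ij by (simp flip: cnj_sum)
qed (auto simp: msum_def)

lemma mtrace_msum_mult:
  assumes "A \<in> carrier_mat d d" "\<And>a. (P :: 'a::finite \<Rightarrow> complex mat) a \<in> carrier_mat d d"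
  shows "mtrace (msum d P * A) = (\<Sum>a\<in>UNIV. mtrace (P a * A))"
proof -
  have "mtrace (msum d P * A) = (\<Sum>i<d. \<Sum>k<d. \<Sum>a\<in>UNIV. P a $$ (i,k) * A $$ (k,i))"
    using assms by (simp add: mtrace_mult_eq_sum[of _ d d] sum_distrib_right)
  also have "\<dots> = (\<Sum>a\<in>UNIV. \<Sum>i<d. \<Sum>k<d. P a $$ (i,k) * A $$ (k,i))"
    by (subst sum.swap, rule sum.cong[OF refl], rule sum.swap)
  also have "\<dots> = (\<Sum>a\<in>UNIV. mtrace (P a * A))"
    using assms by (simp add: mtrace_mult_eq_sum[of _ d d])
  finally show ?thesis .
qed

lemma sum_lessThan_square:
  fixes f :: "nat \<Rightarrow> 'b::comm_monoid_add"
  shows "(\<Sum>p<d*d. f p) = (\<Sum>s<d. \<Sum>u<d. f (s*d + u))"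
  unfolding sum.nat_group[symmetric, of f d d]
proof (rule sum.cong[OF refl])
  fix s
  show "sum f {s*d..<s*d + d} = (\<Sum>u<d. f (s*d + u))"
    using sum.atLeastLessThan_shift_bounds[of f 0 "s*d" d]
    by (simp add: atLeast0LessThan comp_def add.commute)
qed

lemma div_mod_square_index:
  fixes s u d :: nat
  assumes "s < d" "u < d" shows "(s*d + u) div d = s" "(s*d + u) mod d = u"
  using assms by (simp_all add: add.commute[of "s*d"])

lemma qform_kron_state_vec:
  assumes lam: "lam \<in> carrier_mat d d" "mat_adjoint lam = lam"
    and A: "A \<in> carrier_mat d d" "mat_adjoint A = A" and B: "B \<in> carrier_mat d d"
  shows "qform (kron d A B) (state_vec d lam) = mtrace (lam * (B * (lam * entry_conj A)))"
proof -
  have "qform (kron d A B) (state_vec d lam) =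
     (\<Sum>p<d*d. cnj (lam $$ (p mod d, p div d)) *
        (\<Sum>q<d*d. (A $$ (p div d, q div d) * B $$ (p mod d, q mod d)) * lam $$ (q mod d, q div d)))"
    unfolding qform_def kron_def state_vec_def
    by (auto simp: scalar_prod_def atLeast0LessThan intro!: sum.cong)
  also have "\<dots> = (\<Sum>s<d. \<Sum>u<d. cnj (lam $$ (u,s)) *
        (\<Sum>s'<d. \<Sum>u'<d. (A $$ (s,s') * B $$ (u,u')) * lam $$ (u',s')))"
    unfolding sum_lessThan_square by (intro sum.cong refl) (simp add: div_mod_square_index)
  also have "\<dots> = (\<Sum>s<d. \<Sum>u<d. lam $$ (s,u) *
        (\<Sum>u'<d. B $$ (u,u') * (\<Sum>s'<d. lam $$ (u',s') * cnj (A $$ (s',s)))))"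
  proof (intro sum.cong refl)
    fix s u assume "s \<in> {..<d}" "u \<in> {..<d}"
    then have su: "s < d" "u < d" by auto
    have "(\<Sum>u'<d. B $$ (u,u') * (\<Sum>s'<d. lam $$ (u',s') * cnj (A $$ (s',s))))
        = (\<Sum>s'<d. \<Sum>u'<d. (A $$ (s,s') * B $$ (u,u')) * lam $$ (u',s'))"
      using hermitian_entry_cnj[OF A su(1), symmetric]
      by (subst sum.swap) (simp add: sum_distrib_left mult_ac)
    then show "cnj (lam $$ (u,s)) * (\<Sum>s'<d. \<Sum>u'<d. (A $$ (s,s') * B $$ (u,u')) * lam $$ (u',s'))
        = lam $$ (s,u) * (\<Sum>u'<d. B $$ (u,u') * (\<Sum>s'<d. lam $$ (u',s') * cnj (A $$ (s',s))))"
      using hermitian_entry_cnj[OF lam su(2,1)] by simp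
  qed
  also have "\<dots> = mtrace (lam * (B * (lam * entry_conj A)))"
  proof -
    have "(B * (lam * entry_conj A)) $$ (u,s) =
        (\<Sum>u'<d. B $$ (u,u') * (\<Sum>s'<d. lam $$ (u',s') * cnj (A $$ (s',s))))"
      if "u < d" "s < d" for u s
      using that lam(1) A(1) B
      by (simp del: index_mult_mat add: index_mult_mat_sum[of B d d _ d] index_mult_mat_sum[of lam d d _ d])
    then show ?thesis
      using lam(1) A(1) B by (simp add: mtrace_mult_eq_sum[of lam d d])
  qed
  finally show ?thesis .
qed

subsection \<open>Answer probabilities\<close>

definition answer_prob :: "nat \<Rightarrow> complex mat \<Rightarrow> complex mat \<Rightarrow> complex mat \<Rightarrow> real" where
  "answer_prob d lam A B = Re (qform (kron d A B) (state_vec d lam))"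

lemma PVM_entry_conj:
  assumes "PVM d P"
  shows "PVM d (\<lambda>a. entry_conj (P a))"
proof -
  have "proj_mat d (entry_conj (P a))" for a
    by (rule proj_mat_entry_conj[OF PVM_proj_mat[OF assms]])
  moreover have "msum d (\<lambda>a. entry_conj (P a)) = 1\<^sub>m d"
    using assms proj_matD(1)[OF PVM_proj_mat[OF assms]] unfolding PVM_def
    by (intro msum_entry_conj) auto
  ultimately show ?thesis
    unfolding PVM_def proj_mat_def hermitian_mat_def by auto
qed

context
  fixes d :: nat and lam :: "complex mat"
  assumes lam_carrier [simp]: "lam \<in> carrier_mat d d"
    and lam_hermitian: "mat_adjoint lam = lam"
    and lam_trace: "mtrace (lam * lam) = 1"
begin

(* Instantiated at d: simp cannot guess the dimensions in the carrier side conditions. *)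
declare square_mult_assoc[of _ d, simp] left_mult_one_mat[of _ d d, simp]

lemma frob_norm_lam: "frob_norm lam = 1"
proof -
  have "(frob_norm lam)\<^sup>2 = 1"
    using frob_norm_sq_eq_mtrace[OF lam_carrier] lam_hermitian lam_trace by simp
  then show ?thesis using frob_norm_nonneg[of lam] by (simp add: power2_eq_1_iff)
qed

lemma frob_norm_proj_lam_le:
  assumes "proj_mat d P"
  shows "frob_norm (P * lam) \<le> 1" "frob_norm (lam * P) \<le> 1"
  using frob_norm_proj_mult_le[OF assms lam_carrier] frob_norm_mult_proj_le[OF assms lam_carrier]
  by (simp_all add: frob_norm_lam)

lemma Re_mtrace_sandwich:
  assumes P: "proj_mat d P" and Q: "proj_mat d Q"
  shows "Re (mtrace (lam * (P * (lam * Q)))) = (frob_norm (P * (lam * Q)))\<^sup>2"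
proof -
  note [simp] = proj_matD[OF P] proj_matD[OF Q]
  have "mat_adjoint (P * (lam * Q)) = Q * (lam * P)"
    using mat_adjoint_mult[of P d d "lam * Q" d] mat_adjoint_mult[of lam d d Q d] lam_hermitian
    by simp
  then have "mtrace (mat_adjoint (P * (lam * Q)) * (P * (lam * Q))) = mtrace (Q * (lam * (P * (lam * Q))))"
    using proj_mat_mult_idem[OF P, of "lam * Q" d] by simp
  also have "\<dots> = mtrace ((lam * (P * (lam * Q))) * Q)"
    by (rule mtrace_mult_commute[of _ d d]) simp_all
  also have "\<dots> = mtrace (lam * (P * (lam * Q)))"
    by simp
  finally show ?thesis using frob_norm_sq_eq_mtrace[of "P * (lam * Q)" d d] by simp
qed

lemma frob_norm_intertwine_sq:
  assumes P: "proj_mat d P" and Q: "proj_mat d Q"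
  shows "(frob_norm (P * lam - lam * Q))\<^sup>2 = Re (mtrace (P * (lam * lam))) + Re (mtrace (Q * (lam * lam)))
     - 2 * Re (mtrace (lam * (Q * (lam * P))))"
proof -
  note [simp] = proj_matD[OF P] proj_matD[OF Q]
  have adj_P: "mat_adjoint (P * lam) = lam * P"
    using mat_adjoint_mult[of P d d lam d] lam_hermitian by simp
  have adj_Q: "mat_adjoint (lam * Q) = Q * lam"
    using mat_adjoint_mult[of lam d d Q d] lam_hermitian by simp
  have "mtrace (mat_adjoint (P * lam) * (P * lam)) = mtrace ((P * lam) * lam)"
    using adj_P proj_mat_mult_idem[OF P lam_carrier] mtrace_mult_commute[of lam d d "P * lam"] by simp
  moreover have "mtrace (mat_adjoint (lam * Q) * (lam * Q)) = mtrace (Q * (lam * lam))"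
  proof -
    have "mtrace (mat_adjoint (lam * Q) * (lam * Q)) = mtrace ((lam * (lam * Q)) * Q)"
      using adj_Q mtrace_mult_commute[of Q d d "lam * (lam * Q)"] by simp
    also have "\<dots> = mtrace ((lam * lam) * Q)"
      by simp
    finally show ?thesis
      using mtrace_mult_commute[of Q d d "lam * lam"] by simp
  qed
  moreover have "mtrace (mat_adjoint (P * lam) * (lam * Q)) = mtrace (lam * (Q * (lam * P)))"
    using adj_P mtrace_mult_commute[of "lam * P" d d "lam * Q"] by simp
  moreover have c: "P * lam \<in> carrier_mat d d" "lam * Q \<in> carrier_mat d d"
    by simp_all
  ultimately show ?thesis
    unfolding frob_norm_diff_sq[OF c] frob_norm_sq_eq_mtrace[OF c(1)] frob_norm_sq_eq_mtrace[OF c(2)]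
    by simp
qed

lemma frob_norm_intertwine_swap:
  assumes P: "proj_mat d P" and Q: "proj_mat d Q"
  shows "frob_norm (P * lam - lam * Q) = frob_norm (Q * lam - lam * P)"
proof -
  note [simp] = proj_matD[OF P] proj_matD[OF Q]
  have "mat_adjoint (P * lam - lam * Q) = lam * P - Q * lam"
    by (simp add: mat_adjoint_minus[of _ d d] mat_adjoint_mult[of _ d d _ d] lam_hermitian)
  then show ?thesis
    using frob_norm_mat_adjoint[of "P * lam - lam * Q" d d] frob_norm_minus_commute[of "lam * P" d d "Q * lam"]
    by simp
qed

lemma sum_mtrace_sandwich_PVM:
  assumes F: "PVM d F" and X: "X \<in> carrier_mat d d"
  shows "(\<Sum>b\<in>UNIV. mtrace (lam * (F b * (lam * X)))) = mtrace (X * (lam * lam))"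
proof -
  have F_carrier [simp]: "F b \<in> carrier_mat d d" for b
    using proj_matD(1)[OF PVM_proj_mat[OF F]] .
  have "mtrace (lam * (F b * (lam * X))) = mtrace (F b * (lam * (X * lam)))" for b
    using mtrace_mult_commute[of lam d d "F b * (lam * X)"] X by simp
  then have "(\<Sum>b\<in>UNIV. mtrace (lam * (F b * (lam * X)))) = mtrace (msum d F * (lam * (X * lam)))"
    using mtrace_msum_mult[of "lam * (X * lam)" d F] X by simp
  also have "\<dots> = mtrace ((X * lam) * lam)"
    using F X mtrace_mult_commute[of lam d d "X * lam"] unfolding PVM_def by simp
  finally show ?thesis using X by simp
qed

lemma sum_mtrace_rho_PVM:
  assumes E: "PVM d E"
  shows "(\<Sum>a\<in>UNIV. mtrace (E a * (lam * lam))) = 1"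
  using mtrace_msum_mult[of "lam * lam" d E] proj_matD(1)[OF PVM_proj_mat[OF E]] E lam_trace
  unfolding PVM_def by simp

lemma answer_prob_eq_sandwich:
  assumes "proj_mat d A" "proj_mat d B"
  shows "answer_prob d lam A B = (frob_norm (B * (lam * entry_conj A)))\<^sup>2"
  unfolding answer_prob_def
  using qform_kron_state_vec[OF lam_carrier lam_hermitian, of A B] proj_matD[OF assms(1)]
    proj_matD(1)[OF assms(2)] Re_mtrace_sandwich[OF assms(2) proj_mat_entry_conj[OF assms(1)]]
  by simp

lemma answer_prob_eq_mtrace:
  assumes "proj_mat d A" "proj_mat d B"
  shows "answer_prob d lam A B = Re (mtrace (lam * (B * (lam * entry_conj A))))"
  unfolding answer_prob_def
  using qform_kron_state_vec[OF lam_carrier lam_hermitian, of A B] proj_matD[OF assms(1)]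
    proj_matD(1)[OF assms(2)]
  by simp

lemma sum_answer_prob:
  assumes A: "PVM d A" and B: "PVM d B"
  shows "(\<Sum>a\<in>UNIV. \<Sum>b\<in>UNIV. answer_prob d lam (A a) (B b)) = 1"
proof -
  have "(\<Sum>b\<in>UNIV. mtrace (lam * (B b * (lam * entry_conj (A a))))) = mtrace (entry_conj (A a) * (lam * lam))"
    for a using sum_mtrace_sandwich_PVM[OF B] proj_matD(1)[OF PVM_proj_mat[OF A]] by simp
  then have "(\<Sum>a\<in>UNIV. \<Sum>b\<in>UNIV. mtrace (lam * (B b * (lam * entry_conj (A a))))) = 1"
    using sum_mtrace_rho_PVM[OF PVM_entry_conj[OF A]] by simp
  then show ?thesis
    using answer_prob_eq_mtrace[OF PVM_proj_mat[OF A] PVM_proj_mat[OF B]]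
    by (simp flip: Re_sum)
qed

lemma sum_frob_norm_intertwine_sq:
  assumes A: "PVM d A" and B: "PVM d B"
  shows "(\<Sum>a\<in>UNIV. (frob_norm (entry_conj (A a) * lam - lam * B a))\<^sup>2)
    = 2 - 2 * (\<Sum>a\<in>UNIV. answer_prob d lam (A a) (B a))"
proof -
  have A': "PVM d (\<lambda>a. entry_conj (A a))" by (rule PVM_entry_conj[OF A])
  have "Re (\<Sum>a\<in>UNIV. mtrace (entry_conj (A a) * (lam * lam))) = 1"
    "Re (\<Sum>a\<in>UNIV. mtrace (B a * (lam * lam))) = 1"
    using sum_mtrace_rho_PVM[OF A'] sum_mtrace_rho_PVM[OF B] by simp_all
  then show ?thesis
    unfolding frob_norm_intertwine_sq[OF PVM_proj_mat[OF A'] PVM_proj_mat[OF B]]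
      answer_prob_eq_mtrace[OF PVM_proj_mat[OF A] PVM_proj_mat[OF B]]
    by (simp add: sum.distrib sum_subtractf sum_distrib_left)
qed

lemma frob_norm_intertwine_le:
  assumes A: "PVM d A" and B: "PVM d B"
    and diagonal: "1 - \<delta> \<le> (\<Sum>a\<in>UNIV. answer_prob d lam (A a) (B a))"
  shows "frob_norm (entry_conj (A a) * lam - lam * B a) \<le> sqrt (2 * \<delta>)"
proof -
  have "(frob_norm (entry_conj (A a) * lam - lam * B a))\<^sup>2
      \<le> (\<Sum>a\<in>UNIV. (frob_norm (entry_conj (A a) * lam - lam * B a))\<^sup>2)"
    by (rule member_le_sum) simp_all
  also have "\<dots> \<le> 2 * \<delta>"
    unfolding sum_frob_norm_intertwine_sq[OF A B] using diagonal by simp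
  finally show ?thesis by (rule real_le_rsqrt)
qed

lemma frob_norm_proj_product_sq:
  assumes Fa: "proj_mat d Fa" and Fb: "proj_mat d Fb"
  shows "(frob_norm (Fa * Fb * lam))\<^sup>2 = Re (mtrace (Fb * (Fa * (Fb * (lam * lam)))))"
proof -
  note [simp] = proj_matD(1)[OF Fa] proj_matD(1)[OF Fb]
  have "mat_adjoint (Fa * Fb * lam) = lam * (Fb * Fa)"
    using mat_adjoint_mult[of "Fa * Fb" d d lam d] mat_adjoint_mult[of Fa d d Fb d]
      proj_matD(2)[OF Fa] proj_matD(2)[OF Fb] lam_hermitian by simp
  moreover have "Fa * Fb * lam \<in> carrier_mat d d" by simp
  ultimately show ?thesis
    using frob_norm_sq_eq_mtrace[of "Fa * Fb * lam" d d] proj_mat_mult_idem[OF Fa, of "Fb * lam" d]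
      mtrace_mult_commute[of lam d d "Fb * (Fa * (Fb * lam))"]
    by simp
qed

lemma mtrace_proj_cycle:
  assumes Fb: "proj_mat d Fb" and Ea: "Ea \<in> carrier_mat d d"
  shows "mtrace (Fb * (lam * (Ea * (lam * Fb)))) = mtrace (lam * (Fb * (lam * Ea)))"
proof -
  note [simp] = proj_matD(1)[OF Fb] Ea
  have "mtrace (Fb * (lam * (Ea * (lam * Fb)))) = mtrace ((lam * Ea) * (lam * Fb))"
    using mtrace_mult_commute[of Fb d d "lam * (Ea * (lam * Fb))"] proj_matD(3)[OF Fb] by simp
  then show ?thesis
    using mtrace_mult_commute[of "lam * Ea" d d "lam * Fb"] by simp
qed

lemma frob_norm_proj_product_sq_le:
  assumes Fa: "proj_mat d Fa" and Fb: "proj_mat d Fb" and Ea: "proj_mat d Ea" and Eb: "proj_mat d Eb"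
    and close_a: "frob_norm (Ea * lam - lam * Fa) \<le> e"
    and close_b: "frob_norm (Eb * lam - lam * Fb) \<le> e"
  shows "(frob_norm (Fa * Fb * lam))\<^sup>2 \<le> 3 * e + Re (mtrace (lam * (Fb * (lam * Ea))))"
proof -
  note [simp] = proj_matD(1)[OF Fa] proj_matD(1)[OF Fb] proj_matD(1)[OF Ea] proj_matD(1)[OF Eb]
  define Da where "Da = Fa * lam - lam * Ea"
  define Db where "Db = Fb * lam - lam * Eb"
  define Db' where "Db' = Eb * lam - lam * Fb"
  have [simp]: "Da \<in> carrier_mat d d" "Db \<in> carrier_mat d d" "Db' \<in> carrier_mat d d"
    unfolding Da_def Db_def Db'_def by simp_all
  have "frob_norm Da \<le> e" "frob_norm Db \<le> e" "frob_norm Db' \<le> e"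
    using close_a close_b frob_norm_intertwine_swap[OF Fa Ea] frob_norm_intertwine_swap[OF Fb Eb]
    unfolding Da_def Db_def Db'_def by simp_all
  text \<open>Telescope: each step exchanges one projection across \<open>lam\<close> at a cost of at most \<open>e\<close>.\<close>
  define T0 where "T0 = mtrace (Fb * (Fa * (Fb * (lam * lam))))"
  define T1 where "T1 = mtrace (Fb * (Fa * (lam * (Eb * lam))))"
  define T2 where "T2 = mtrace (Fb * (lam * (Ea * (Eb * lam))))"
  define T3 where "T3 = mtrace (Fb * (lam * (Ea * (lam * Fb))))"
  have "cmod (T0 - T1) \<le> frob_norm (Fb * (Fa * Db)) * frob_norm lam"
    unfolding T0_def T1_def Db_def
    using cmod_mtrace_mult_le[of "Fb * (Fa * Db)" d d lam]
    by (simp add: Db_def mult_minus_distrib_mat[of _ d d _ d] minus_mult_distrib_mat[of _ d d _ _ d]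
        mtrace_minus[of _ d])
  also have "\<dots> \<le> frob_norm Db"
    using frob_norm_proj_mult_le[OF Fb, of "Fa * Db" d] frob_norm_proj_mult_le[OF Fa, of Db d]
    by (simp add: frob_norm_lam)
  finally have step1: "cmod (T0 - T1) \<le> e" using \<open>frob_norm Db \<le> e\<close> by simp
  have "cmod (T1 - T2) \<le> frob_norm (Fb * Da) * frob_norm (Eb * lam)"
    unfolding T1_def T2_def
    using cmod_mtrace_mult_le[of "Fb * Da" d d "Eb * lam"]
    by (simp add: Da_def mult_minus_distrib_mat[of _ d d _ d] minus_mult_distrib_mat[of _ d d _ _ d]
        mtrace_minus[of _ d])
  also have "\<dots> \<le> frob_norm Da"
    using mult_mono[OF frob_norm_proj_mult_le[OF Fb, of Da d] frob_norm_proj_lam_le(1)[OF Eb]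
        frob_norm_nonneg frob_norm_nonneg]
    by simp
  finally have step2: "cmod (T1 - T2) \<le> e" using \<open>frob_norm Da \<le> e\<close> by simp
  have "cmod (T2 - T3) \<le> frob_norm (Fb * (lam * Ea)) * frob_norm Db'"
    unfolding T2_def T3_def
    using cmod_mtrace_mult_le[of "Fb * (lam * Ea)" d d Db']
    by (simp add: Db'_def mult_minus_distrib_mat[of _ d d _ d] minus_mult_distrib_mat[of _ d d _ _ d]
        mtrace_minus[of _ d])
  also have "\<dots> \<le> frob_norm Db'"
    using mult_right_mono[OF order_trans[OF frob_norm_proj_mult_le[OF Fb, of "lam * Ea" d]
        frob_norm_proj_lam_le(2)[OF Ea]] frob_norm_nonneg]
    by simp
  finally have step3: "cmod (T2 - T3) \<le> e" using \<open>frob_norm Db' \<le> e\<close> by simp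
  have "Re T0 \<le> Re T3 + 3 * e"
    using step1 step2 step3 abs_Re_le_cmod[of "T0 - T1"] abs_Re_le_cmod[of "T1 - T2"]
      abs_Re_le_cmod[of "T2 - T3"] by simp
  then show ?thesis
    unfolding T0_def T3_def frob_norm_proj_product_sq[OF Fa Fb] mtrace_proj_cycle[OF Fb proj_matD(1)[OF Ea]]
    by simp
qed

end

subsection \<open>Losing mass of a near-perfect strategy\<close>

lemma sum_if_split_mass:
  fixes p :: "'a::finite \<Rightarrow> 'b::finite \<Rightarrow> real"
  shows "(\<Sum>a\<in>UNIV. \<Sum>b\<in>UNIV. if V a b then p a b else 0)
    = (\<Sum>a\<in>UNIV. \<Sum>b\<in>UNIV. p a b) - (\<Sum>a\<in>UNIV. \<Sum>b\<in>UNIV. if V a b then 0 else p a b)"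
proof -
  have "(\<Sum>a\<in>UNIV. \<Sum>b\<in>UNIV. if V a b then p a b else 0)
      + (\<Sum>a\<in>UNIV. \<Sum>b\<in>UNIV. if V a b then 0 else p a b) = (\<Sum>a\<in>UNIV. \<Sum>b\<in>UNIV. p a b)"
    unfolding sum.distrib[symmetric] by (intro sum.cong refl) simp
  then show ?thesis by simp
qed

lemma losing_mass_le:
  fixes eta :: "'i::finite \<Rightarrow> 'i \<Rightarrow> real" and p :: "'i \<Rightarrow> 'i \<Rightarrow> 'a::finite \<Rightarrow> 'a \<Rightarrow> real"
  assumes eta_min: "\<And>i j. m \<le> eta i j" and m_pos: "0 < m"
    and eta_sum: "(\<Sum>i\<in>UNIV. \<Sum>j\<in>UNIV. eta i j) = 1"
    and p_nonneg: "\<And>i j a b. 0 \<le> p i j a b"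
    and p_sum: "\<And>i j. (\<Sum>a\<in>UNIV. \<Sum>b\<in>UNIV. p i j a b) = 1"
    and win: "1 - eps \<le> (\<Sum>i\<in>UNIV. \<Sum>j\<in>UNIV. eta i j *
                (\<Sum>a\<in>UNIV. \<Sum>b\<in>UNIV. if V a b i j then p i j a b else 0))"
  shows "(\<Sum>a\<in>UNIV. \<Sum>b\<in>UNIV. if V a b i j then 0 else p i j a b) \<le> eps / m"
proof -
  define lose where "lose i j = (\<Sum>a\<in>UNIV. \<Sum>b\<in>UNIV. if V a b i j then 0 else p i j a b)" for i j
  have lose_nonneg: "0 \<le> lose i j" for i j
    unfolding lose_def using p_nonneg by (intro sum_nonneg) auto
  have weighted_nonneg: "0 \<le> eta i j * lose i j" for i j
    using eta_min[of i j] m_pos lose_nonneg[of i j] by simp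
  have "(\<Sum>i\<in>UNIV. \<Sum>j\<in>UNIV. eta i j * lose i j) \<le> eps"
    using win eta_sum unfolding sum_if_split_mass p_sum lose_def[symmetric]
    by (simp add: right_diff_distrib sum_subtractf)
  moreover have "eta i j * lose i j \<le> (\<Sum>j\<in>UNIV. eta i j * lose i j)"
    by (rule member_le_sum) (simp_all add: weighted_nonneg)
  moreover have "\<dots> \<le> (\<Sum>i\<in>UNIV. \<Sum>j\<in>UNIV. eta i j * lose i j)"
    by (rule member_le_sum) (simp_all add: weighted_nonneg sum_nonneg)
  moreover have "m * lose i j \<le> eta i j * lose i j"
    by (rule mult_right_mono[OF eta_min lose_nonneg])
  ultimately show ?thesis
    using m_pos unfolding lose_def[symmetric] by (simp add: field_simps)
qed

lemma diagonal_mass_ge: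
  fixes p :: "'a::finite \<Rightarrow> 'a \<Rightarrow> real"
  assumes p_nonneg: "\<And>a b. 0 \<le> p a b" and p_sum: "(\<Sum>a\<in>UNIV. \<Sum>b\<in>UNIV. p a b) = 1"
    and consistent: "\<And>a b. V a b \<Longrightarrow> a = b"
    and lose: "(\<Sum>a\<in>UNIV. \<Sum>b\<in>UNIV. if V a b then 0 else p a b) \<le> \<delta>"
  shows "1 - \<delta> \<le> (\<Sum>a\<in>UNIV. p a a)"
proof -
  have "(\<Sum>a\<in>UNIV. \<Sum>b\<in>UNIV. if V a b then p a b else 0) \<le> (\<Sum>a\<in>UNIV. p a a)"
  proof (rule sum_mono)
    fix a
    have "(\<Sum>b\<in>UNIV. if V a b then p a b else 0) \<le> (\<Sum>b\<in>UNIV. if a = b then p a b else 0)"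
      using p_nonneg consistent by (intro sum_mono) auto
    then show "(\<Sum>b\<in>UNIV. if V a b then p a b else 0) \<le> p a a" by simp
  qed
  then show ?thesis using lose unfolding sum_if_split_mass p_sum by linarith
qed

lemma losing_answer_le:
  fixes p :: "'a::finite \<Rightarrow> 'b::finite \<Rightarrow> real"
  assumes "\<And>a b. 0 \<le> p a b" and "\<not> V a b"
  shows "p a b \<le> (\<Sum>a\<in>UNIV. \<Sum>b\<in>UNIV. if V a b then 0 else p a b)"
proof -
  have "p a b \<le> (\<Sum>b'\<in>UNIV. if V a b' then 0 else p a b')"
    using member_le_sum[of b UNIV "\<lambda>b'. if V a b' then 0 else p a b'"] assms by simp
  also have "\<dots> \<le> (\<Sum>a'\<in>UNIV. \<Sum>b'\<in>UNIV. if V a' b' then 0 else p a' b')"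
    by (rule member_le_sum) (simp_all add: assms(1) sum_nonneg)
  finally show ?thesis .
qed

lemma eps_perfect_strategy_bounds:
  fixes eta :: "'i::finite \<Rightarrow> 'i \<Rightarrow> real" and V :: "'a::finite \<Rightarrow> 'a \<Rightarrow> 'i \<Rightarrow> 'i \<Rightarrow> bool"
  assumes game: "synchronous_game eta V" and eta_min: "\<And>i j. m \<le> eta i j" and m_pos: "0 < m"
    and strategy: "quantum_strategy d E F lam" and perfect: "eps_perfect eta V d E F lam eps"
  shows "frob_norm (entry_conj (E i a) * lam - lam * F i a) \<le> sqrt (2 / m) * sqrt eps"
    and "\<not> V a b i j \<Longrightarrow> (frob_norm (F i a * F j b * lam))\<^sup>2 \<le> 3 * sqrt (2 / m) * sqrt eps + (1 / m) * eps"
proof -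
  have E: "\<And>i. PVM d (E i)" and F: "\<And>i. PVM d (F i)" and lam_trace: "mtrace (lam * lam) = 1"
    and lam: "lam \<in> carrier_mat d d" "mat_adjoint lam = lam"
    using strategy unfolding quantum_strategy_def psd_mat_def hermitian_mat_def by auto
  define p where "p i j a b = answer_prob d lam (E i a) (F j b)" for i j a b
  have p_nonneg: "0 \<le> p i j a b" for i j a b
    unfolding p_def answer_prob_eq_sandwich[OF lam lam_trace PVM_proj_mat[OF E] PVM_proj_mat[OF F]] by simp
  have p_sum: "(\<Sum>a\<in>UNIV. \<Sum>b\<in>UNIV. p i j a b) = 1" for i j
    unfolding p_def by (rule sum_answer_prob[OF lam lam_trace E F])
  have eta_sum: "(\<Sum>i\<in>UNIV. \<Sum>j\<in>UNIV. eta i j) = 1"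
    using game unfolding synchronous_game_def by simp
  have win: "1 - eps \<le> (\<Sum>i\<in>UNIV. \<Sum>j\<in>UNIV. eta i j *
      (\<Sum>a\<in>UNIV. \<Sum>b\<in>UNIV. if V a b i j then p i j a b else 0))"
    using perfect unfolding eps_perfect_def win_prob_def p_def answer_prob_def .
  have lose: "(\<Sum>a\<in>UNIV. \<Sum>b\<in>UNIV. if V a b i j then 0 else p i j a b) \<le> eps / m" for i j
    by (rule losing_mass_le[OF eta_min m_pos eta_sum p_nonneg p_sum win])
  have close: "frob_norm (entry_conj (E i a) * lam - lam * F i a) \<le> sqrt (2 / m) * sqrt eps" for i a
  proof -
    have "1 - eps / m \<le> (\<Sum>a\<in>UNIV. p i i a a)"
      using game unfolding synchronous_game_def by (intro diagonal_mass_ge[OF p_nonneg p_sum _ lose]) blast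
    then show ?thesis
      using frob_norm_intertwine_le[OF lam lam_trace E[of i] F[of i], of "eps / m" a]
      by (simp add: p_def real_sqrt_mult[symmetric])
  qed
  then show "frob_norm (entry_conj (E i a) * lam - lam * F i a) \<le> sqrt (2 / m) * sqrt eps" .
  assume "\<not> V a b i j"
  then have "Re (mtrace (lam * (F j b * (lam * entry_conj (E i a))))) \<le> eps / m"
    using losing_answer_le[of "p i j" "\<lambda>a b. V a b i j" a b] p_nonneg lose[of i j]
    unfolding p_def answer_prob_eq_mtrace[OF lam lam_trace PVM_proj_mat[OF E] PVM_proj_mat[OF F]]
    by simp
  then show "(frob_norm (F i a * F j b * lam))\<^sup>2 \<le> 3 * sqrt (2 / m) * sqrt eps + (1 / m) * eps"
    using frob_norm_proj_product_sq_le[OF lam lam_trace PVM_proj_mat[OF F] PVM_proj_mat[OF F]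
        proj_mat_entry_conj[OF PVM_proj_mat[OF E]] proj_mat_entry_conj[OF PVM_proj_mat[OF E]]
        close[of i a] close[of j b]]
    by simp
qed

lemma feval_fsum_Gen:
  assumes "\<And>a. F i a \<in> carrier_mat d d" and "distinct xs"
  shows "feval d F (fsum (map (Gen i) xs)) = mat d d (\<lambda>pq. \<Sum>a\<in>set xs. F i a $$ pq)"
  using assms(2)
proof (induction xs)
  case Nil
  then show ?case unfolding fsum_def by (intro eq_matI) auto
next
  case (Cons x xs)
  then have "feval d F (fsum (map (Gen i) (x # xs))) = F i x + mat d d (\<lambda>pq. \<Sum>a\<in>set xs. F i a $$ pq)"
    unfolding fsum_def by simp
  also have "\<dots> = mat d d (\<lambda>pq. \<Sum>a\<in>set (x # xs). F i a $$ pq)"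
    using Cons.prems assms(1)[of x] by (intro eq_matI) auto
  finally show ?case .
qed

lemma eps_representation_sync_relations:
  assumes F: "\<And>i. PVM d (F i)" and lam: "lam \<in> carrier_mat d d" and \<delta>: "0 \<le> \<delta>"
    and products: "\<And>i j a b. \<not> V a b i j \<Longrightarrow> rho_norm lam (F i a * F j b) \<le> \<delta>"
  shows "eps_representation (sync_relations V) (rho_norm lam) d F \<delta>"
  unfolding eps_representation_def
proof
  fix r assume "r \<in> sync_relations V"
  then consider (idempotent) i a where "r = Add (Mul (Gen i a) (Gen i a)) (Neg (Gen i a))"
    | (selfadjoint) i a where "r = Add (Gen i a) (Neg (Star (Gen i a)))"
    | (complete) i xs where "r = Add (fsum (map (Gen i) xs)) (Neg Unit)" "distinct xs" "set xs = UNIV"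
    | (orthogonal) i j a b where "r = Mul (Gen i a) (Gen j b)" "\<not> V a b i j"
    unfolding sync_relations_def by (elim UnE CollectE exE conjE; metis)
  then show "rho_norm lam (feval d F r) \<le> \<delta>"
  proof cases
    case (idempotent i a)
    then have "feval d F r = 0\<^sub>m d d"
      using PVM_proj_mat[OF F, of i a] by (auto simp: proj_mat_def)
    then show ?thesis using lam \<delta> by (simp add: rho_norm_def)
  next
    case (selfadjoint i a)
    then have "feval d F r = 0\<^sub>m d d"
      using PVM_proj_mat[OF F, of i a] by (auto simp: proj_mat_def)
    then show ?thesis using lam \<delta> by (simp add: rho_norm_def)
  next
    case (complete i xs)
    have "feval d F (fsum (map (Gen i) xs)) = msum d (F i)"
      unfolding feval_fsum_Gen[where F=F and i=i, OF proj_matD(1)[OF PVM_proj_mat[OF F]] complete(2)] complete(3)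
      by (intro eq_matI) (auto simp: msum_def)
    then have "feval d F r = 0\<^sub>m d d"
      using F[of i] complete(1) unfolding PVM_def by auto
    then show ?thesis using lam \<delta> by (simp add: rho_norm_def)
  next
    case (orthogonal i j a b)
    then show ?thesis using products by simp
  qed
qed

lemma quarter_power_bound:
  fixes eps a b x :: real
  assumes eps: "0 < eps" "eps \<le> 1" and ab: "0 \<le> a" "0 \<le> b"
    and x: "x\<^sup>2 \<le> a * sqrt eps + b * eps"
  shows "x \<le> sqrt (a + b) * eps powr (1/4)"
proof -
  have "eps \<le> sqrt eps"
    using eps by (intro real_le_rsqrt) (simp add: power2_eq_square mult_le_cancel_left1)
  then have "x\<^sup>2 \<le> (a + b) * sqrt eps"
    using x ab by (smt (verit) distrib_right mult_left_mono)
  then have "x \<le> sqrt ((a + b) * sqrt eps)"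
    by (rule real_le_rsqrt)
  moreover have "sqrt (sqrt eps) = eps powr (1/4)"
    using eps by (simp add: powr_half_sqrt[symmetric] powr_powr)
  ultimately show ?thesis by (simp add: real_sqrt_mult)
qed

lemma synchronous_game_min_weight:
  assumes "synchronous_game eta V"
  obtains m where "0 < m" "\<And>i j. m \<le> eta i j"
proof
  show "0 < Min (range (case_prod eta))"
    using assms unfolding synchronous_game_def by (auto simp: Min_gr_iff)
  show "Min (range (case_prod eta)) \<le> eta i j" for i j
    by (rule Min_le) (auto intro: range_eqI[of _ _ "(i, j)"])
qed

theorem mainTheorem8:
  fixes eta :: "'i::finite \<Rightarrow> 'i \<Rightarrow> real"
    and V :: "'a::finite \<Rightarrow> 'a \<Rightarrow> 'i \<Rightarrow> 'i \<Rightarrow> bool"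
  assumes "synchronous_game eta V"
  shows "\<exists>C>0. \<forall>eps::real. 0 < eps \<and> eps \<le> 1 \<longrightarrow>
     (\<forall>(d::nat) E F lam. quantum_strategy d E F lam \<and> eps_perfect eta V d E F lam eps \<longrightarrow>
        eps_representation (sync_relations V) (rho_norm lam) d F (C * eps powr (1/4)) \<and>
        (synchronous_strategy E F \<longrightarrow>
           (\<forall>i a. frob_norm (F i a * lam - lam * F i a) \<le> C * eps powr (1/2))))"
proof -
  obtain m where m: "0 < m" "\<And>i j. m \<le> eta i j"
    using synchronous_game_min_weight[OF assms] by blast
  define c where "c = sqrt (2 / m)"
  define C where "C = c + sqrt (3 * c + 1 / m) + 1"
  have c: "0 \<le> c" "0 \<le> sqrt (3 * c + 1 / m)" unfolding c_def using m by simp_all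
  show ?thesis
  proof (intro exI[of _ C] conjI allI impI)
    show "0 < C" unfolding C_def using c by linarith
    fix eps :: real and d E F lam
    assume eps: "0 < eps \<and> eps \<le> 1"
      and strategy: "quantum_strategy d E F lam \<and> eps_perfect eta V d E F lam eps"
    note bounds = eps_perfect_strategy_bounds[OF assms m(2,1), of d E F lam eps, folded c_def]
    have "rho_norm lam (F i a * F j b) \<le> C * eps powr (1/4)" if "\<not> V a b i j" for i j a b
    proof -
      have "rho_norm lam (F i a * F j b) \<le> sqrt (3 * c + 1 / m) * eps powr (1/4)"
        using quarter_power_bound[of eps "3 * c" "1 / m", OF _ _ _ _ bounds(2)[OF _ _ that]]
          eps strategy m c unfolding rho_norm_def by (simp add: mult.assoc)
      also have "\<dots> \<le> C * eps powr (1/4)"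
        unfolding C_def using c by (intro mult_right_mono) auto
      finally show ?thesis .
    qed
    then show "eps_representation (sync_relations V) (rho_norm lam) d F (C * eps powr (1/4))"
      using strategy eps c
      by (intro eps_representation_sync_relations) (auto simp: quantum_strategy_def psd_mat_def
          hermitian_mat_def C_def)
    fix i a assume "synchronous_strategy E F"
    then have "frob_norm (F i a * lam - lam * F i a) \<le> c * sqrt eps"
      using bounds(1)[of i a] strategy eps unfolding synchronous_strategy_def by simp
    also have "\<dots> \<le> C * eps powr (1/2)"
      unfolding C_def using c eps by (simp add: powr_half_sqrt mult_right_mono)
    finally show "frob_norm (F i a * lam - lam * F i a) \<le> C * eps powr (1/2)" .
  qed
qed

end
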